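(* Let $X$ be a $T_0$ space. If the Smyth power space $P_S(X)$ is first-countable, then $X$ is first-countable.
   Context: The specialization order of $X$ is $x\le y$ iff $x\in\overline{\{y\}}$; saturated sets are upper sets in this order. $\mathsf{K}(X)$ is the set of nonempty compact saturated subsets of $X$. For open $U\subseteq X$, $\Box U=\{K\in\mathsf{K}(X):K\subseteq U\}$; the Smyth power space $P_S(X)$ is $\mathsf{K}(X)$ with the topology having base $\{\Box U: U\text{ open}\}$. *)

theory Defs
  imports "HOL-Analysis.Analysis"
begin

definition spec_le :: "'a topology \<Rightarrow> 'a \<Rightarrow> 'a \<Rightarrow> bool" where
  "spec_le X x y \<longleftrightarrow> x \<in> X closure_of {y}"

definition saturated_in :: "'a topology \<Rightarrow> 'a set \<Rightarrow> bool" where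
  "saturated_in X A \<longleftrightarrow> A \<subseteq> topspace X \<and>
     (\<forall>x\<in>A. \<forall>y\<in>topspace X. spec_le X x y \<longrightarrow> y \<in> A)"

definition Ksat :: "'a topology \<Rightarrow> 'a set set" where
  "Ksat X = {K. K \<noteq> {} \<and> compactin X K \<and> saturated_in X K}"

definition smyth_box :: "'a topology \<Rightarrow> 'a set \<Rightarrow> 'a set set" where
  "smyth_box X U = {K \<in> Ksat X. K \<subseteq> U}"

definition smyth_power :: "'a topology \<Rightarrow> 'a set topology" where
  "smyth_power X = topology_generated_by {smyth_box X U | U. openin X U}"

end

theory Submission
  imports Defs
begin

text \<open>The upper closure \<up>x of a point lies inside every open neighbourhood of x, so it is
compact and saturated, i.e. a point of the Smyth power space. For an open U the box of U
contains \<up>y exactly when y \<in> U, so inclusions of boxes reflect inclusions of open sets.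
Hence shrinking each member of a countable neighbourhood base of \<up>x to a basic box of an
open set containing \<up>x yields a countable neighbourhood base of x.\<close>

definition upclosure :: "'a topology \<Rightarrow> 'a \<Rightarrow> 'a set" where
  "upclosure X x = {y \<in> topspace X. spec_le X x y}"

lemma upclosure_subset_topspace: "upclosure X x \<subseteq> topspace X"
  unfolding upclosure_def by auto

lemma upclosure_subset_open:
  assumes "openin X U" "x \<in> U"
  shows "upclosure X x \<subseteq> U"
  using assms unfolding upclosure_def spec_le_def by (auto simp: in_closure_of)

lemma mem_upclosure_self: "x \<in> topspace X \<Longrightarrow> x \<in> upclosure X x"
  unfolding upclosure_def spec_le_def by (auto simp: in_closure_of)

lemma compactin_upclosure:
  assumes "x \<in> topspace X"
  shows "compactin X (upclosure X x)"
  unfolding compactin_def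
proof (intro conjI allI impI)
  show "upclosure X x \<subseteq> topspace X"
    by (rule upclosure_subset_topspace)
next
  fix \<U> assume \<U>: "(\<forall>U\<in>\<U>. openin X U) \<and> upclosure X x \<subseteq> \<Union>\<U>"
  then obtain W where W: "W \<in> \<U>" "x \<in> W"
    using mem_upclosure_self[OF assms] by blast
  with \<U> have "openin X W"
    by blast
  then have "upclosure X x \<subseteq> W"
    using W(2) by (rule upclosure_subset_open)
  with W(1) show "\<exists>\<F>. finite \<F> \<and> \<F> \<subseteq> \<U> \<and> upclosure X x \<subseteq> \<Union>\<F>"
    by (intro exI[of _ "{W}"]) simp
qed

lemma saturated_in_upclosure: "saturated_in X (upclosure X x)"
  unfolding saturated_in_def
proof (intro conjI ballI impI)
  show "upclosure X x \<subseteq> topspace X"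
    by (rule upclosure_subset_topspace)
next
  fix y z
  assume y: "y \<in> upclosure X x" and z: "z \<in> topspace X" and "spec_le X y z"
  then have "X closure_of {y} \<subseteq> X closure_of (X closure_of {z})"
    unfolding spec_le_def by (intro closure_of_mono) simp
  then have "X closure_of {y} \<subseteq> X closure_of {z}"
    by (simp only: closure_of_closure_of)
  with y z show "z \<in> upclosure X x"
    unfolding upclosure_def spec_le_def by auto
qed

lemma upclosure_in_Ksat:
  assumes "x \<in> topspace X"
  shows "upclosure X x \<in> Ksat X"
proof -
  have "upclosure X x \<noteq> {}"
    using mem_upclosure_self[OF assms] by auto
  then show ?thesis
    unfolding Ksat_def using compactin_upclosure[OF assms] saturated_in_upclosure by simp
qed

lemma upclosure_in_smyth_box_iff:
  assumes "openin X U" "x \<in> topspace X"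
  shows "upclosure X x \<in> smyth_box X U \<longleftrightarrow> x \<in> U"
  using upclosure_in_Ksat[OF assms(2)] upclosure_subset_open[OF assms(1)]
    mem_upclosure_self[OF assms(2)]
  unfolding smyth_box_def by auto

lemma smyth_box_subset_imp_subset:
  assumes "openin X U" "smyth_box X U \<subseteq> smyth_box X W"
  shows "U \<subseteq> W"
proof
  fix y assume "y \<in> U"
  moreover have y: "y \<in> topspace X"
    using \<open>y \<in> U\<close> openin_subset[OF assms(1)] by blast
  ultimately have "upclosure X y \<in> smyth_box X W"
    using assms(2) upclosure_in_smyth_box_iff[OF assms(1)] by blast
  then show "y \<in> W"
    using mem_upclosure_self[OF y] unfolding smyth_box_def by blast
qed

lemma openin_smyth_power_smyth_box:
  "openin X U \<Longrightarrow> openin (smyth_power X) (smyth_box X U)"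
  unfolding smyth_power_def openin_topology_generated_by_iff
  by (rule generate_topology_on.Basis) blast

lemma openin_smyth_power_imp_smyth_box:
  assumes "openin (smyth_power X) \<V>" "K \<in> \<V>"
  shows "\<exists>U. openin X U \<and> K \<subseteq> U \<and> smyth_box X U \<subseteq> \<V>"
proof -
  have "generate_topology_on {smyth_box X U | U. openin X U} \<V>"
    using assms(1) unfolding smyth_power_def openin_topology_generated_by_iff .
  then show ?thesis
    using assms(2)
  proof (induction arbitrary: K rule: generate_topology_on.induct)
    case Empty
    then show ?case by simp
  next
    case (Int \<V>\<^sub>1 \<V>\<^sub>2)
    obtain U\<^sub>1 where U\<^sub>1: "openin X U\<^sub>1" "K \<subseteq> U\<^sub>1" "smyth_box X U\<^sub>1 \<subseteq> \<V>\<^sub>1"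
      using Int.IH(1) Int.prems by blast
    obtain U\<^sub>2 where U\<^sub>2: "openin X U\<^sub>2" "K \<subseteq> U\<^sub>2" "smyth_box X U\<^sub>2 \<subseteq> \<V>\<^sub>2"
      using Int.IH(2) Int.prems by blast
    have "smyth_box X (U\<^sub>1 \<inter> U\<^sub>2) \<subseteq> \<V>\<^sub>1 \<inter> \<V>\<^sub>2"
      using U\<^sub>1(3) U\<^sub>2(3) unfolding smyth_box_def by blast
    with U\<^sub>1 U\<^sub>2 show ?case
      by (intro exI[of _ "U\<^sub>1 \<inter> U\<^sub>2"]) (simp add: openin_Int)
  next
    case (UN \<K>)
    then obtain \<V> where "\<V> \<in> \<K>" "K \<in> \<V>"
      by blast
    then obtain U where "openin X U" "K \<subseteq> U" "smyth_box X U \<subseteq> \<V>"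
      using UN.IH by blast
    with \<open>\<V> \<in> \<K>\<close> show ?case
      by (intro exI[of _ U]) blast
  next
    case (Basis \<V>)
    then obtain U where "\<V> = smyth_box X U" "openin X U"
      by blast
    with Basis.prems show ?case
      by (intro exI[of _ U]) (simp add: smyth_box_def)
  qed
qed

lemma upclosure_in_topspace_smyth_power:
  assumes "x \<in> topspace X"
  shows "upclosure X x \<in> topspace (smyth_power X)"
proof -
  have "upclosure X x \<in> smyth_box X (topspace X)"
    using assms by (simp add: upclosure_in_smyth_box_iff)
  then show ?thesis
    using openin_subset[OF openin_smyth_power_smyth_box[OF openin_topspace]] by blast
qed

lemma countable_nhds_base_from_smyth_power:
  assumes x: "x \<in> topspace X"
    and "\<exists>\<B>. countable \<B> \<and> (\<forall>\<V>\<in>\<B>. openin (smyth_power X) \<V>) \<and>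
      (\<forall>\<W>. openin (smyth_power X) \<W> \<and> upclosure X x \<in> \<W> \<longrightarrow>
          (\<exists>\<V>\<in>\<B>. upclosure X x \<in> \<V> \<and> \<V> \<subseteq> \<W>))"
  shows "\<exists>\<C>. countable \<C> \<and> (\<forall>V\<in>\<C>. openin X V) \<and>
           (\<forall>W. openin X W \<and> x \<in> W \<longrightarrow> (\<exists>V\<in>\<C>. x \<in> V \<and> V \<subseteq> W))"
proof -
  obtain \<B> where \<B>: "countable \<B>" "\<forall>\<V>\<in>\<B>. openin (smyth_power X) \<V>"
    "\<forall>\<W>. openin (smyth_power X) \<W> \<and> upclosure X x \<in> \<W> \<longrightarrow>
          (\<exists>\<V>\<in>\<B>. upclosure X x \<in> \<V> \<and> \<V> \<subseteq> \<W>)"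
    using assms(2) by blast
  define shrink where "shrink \<V> =
    (SOME U. openin X U \<and> upclosure X x \<subseteq> U \<and> smyth_box X U \<subseteq> \<V>)" for \<V>
  have shrink: "openin X (shrink \<V>) \<and> upclosure X x \<subseteq> shrink \<V> \<and> smyth_box X (shrink \<V>) \<subseteq> \<V>"
    if "\<V> \<in> \<B>" "upclosure X x \<in> \<V>" for \<V>
  proof -
    have "openin (smyth_power X) \<V>"
      using \<B>(2) that(1) by blast
    from openin_smyth_power_imp_smyth_box[OF this that(2)] show ?thesis
      unfolding shrink_def by (rule someI_ex)
  qed
  let ?\<C> = "shrink ` {\<V> \<in> \<B>. upclosure X x \<in> \<V>}"
  have "\<exists>V\<in>?\<C>. x \<in> V \<and> V \<subseteq> W" if W: "openin X W" "x \<in> W" for W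
  proof -
    have "upclosure X x \<in> smyth_box X W"
      using upclosure_in_smyth_box_iff[OF W(1) x] W(2) by blast
    with \<B>(3) openin_smyth_power_smyth_box[OF W(1)]
    obtain \<V> where \<V>: "\<V> \<in> \<B>" "upclosure X x \<in> \<V>" "\<V> \<subseteq> smyth_box X W"
      by auto
    note shrink\<V> = shrink[OF \<V>(1,2)]
    then have "shrink \<V> \<subseteq> W"
      using \<V>(3) by (meson smyth_box_subset_imp_subset order_trans)
    moreover have "x \<in> shrink \<V>"
      using shrink\<V> mem_upclosure_self[OF x] by blast
    ultimately show ?thesis
      using \<V>(1,2) by blast
  qed
  moreover have "countable ?\<C>"
    using \<B>(1) by simp
  moreover have "\<forall>V\<in>?\<C>. openin X V"
    using shrink by blast
  ultimately show ?thesis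
    by (intro exI[of _ ?\<C>]) blast
qed

theorem mainTheorem6:
  fixes X :: "'a topology"
  assumes "t0_space X"
    and "first_countable (smyth_power X)"
  shows "first_countable X"
  unfolding first_countable_def
proof
  fix x assume x: "x \<in> topspace X"
  then have "upclosure X x \<in> topspace (smyth_power X)"
    by (rule upclosure_in_topspace_smyth_power)
  with assms(2) have "\<exists>\<B>. countable \<B> \<and> (\<forall>\<V>\<in>\<B>. openin (smyth_power X) \<V>) \<and>
      (\<forall>\<W>. openin (smyth_power X) \<W> \<and> upclosure X x \<in> \<W> \<longrightarrow>
          (\<exists>\<V>\<in>\<B>. upclosure X x \<in> \<V> \<and> \<V> \<subseteq> \<W>))"
    unfolding first_countable_def by (rule bspec)
  with x show "\<exists>\<C>. countable \<C> \<and> (\<forall>V\<in>\<C>. openin X V) \<and>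
      (\<forall>W. openin X W \<and> x \<in> W \<longrightarrow> (\<exists>V\<in>\<C>. x \<in> V \<and> V \<subseteq> W))"
    by (rule countable_nhds_base_from_smyth_power)
qed

end
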